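(* Consider an execution of procedure Mis\_SWD and a phase $i$ with $0\le i<\log\Delta$. Suppose that at the beginning of phase $i$ the following invariant holds: (a) every box of the pivotal grid contains at most $\Delta/2^i$ nodes of status worker; (b) every node having a neighbor (in $G$) of status leader has status slave; (c) every node has at most $25$ neighbors of status leader, and no node has status candidate. Then, conditional on this, with probability at least $1-O(\log N)/n^3$ properties (b) and (c) hold at the beginning of phase $i+1$.
   Context: Model: $n$ nodes in the Euclidean plane with unique names in $\{1,\dots,N\}$, $N\ge n$; synchronous rounds, each node transmits or listens, no collision detection; uniform power $P$, constants $\alpha>2$, $\mathcal{N}>0$, $\beta\ge1$, $\varepsilon\in(0,1)$, $r=(P/(\mathcal{N}\beta))^{1/\alpha}$; if set $\mathcal{T}$ transmits, $u\notin\mathcal{T}$ receives from $v\in\mathcal{T}$ iff $\frac{P\,\mathrm{dist}(v,u)^{-\alpha}}{\mathcal{N}+\sum_{w\in\mathcal{T}\setminus\{v\}}P\,\mathrm{dist}(w,u)^{-\alpha}}\ge\beta$ and $\mathrm{dist}(v,u)\le(1-\varepsilon)r$. Communication graph $G$: $u\sim v$ iff $\mathrm{dist}(u,v)\le(1-\varepsilon)r$; $\Delta$ = maximum degree of $G$ (known to nodes; $\Delta$, $N$ powers of 2). Pivotal grid: partition of the plane into half-open axis-parallel boxes of side $r/\sqrt2$ with grid lines through $(0,0)$. An $(N,x)$-ssf is a family $(S_0,\dots,S_{s-1})$ of subsets of $\{1,\dots,N\}$ such that for every nonempty $Z$ with $|Z|\le x$ and every $z\in Z$ some $S_i\cap Z=\{z\}$;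 executing it, a participating node $v$ transmits in the $i$-th round iff $v\in S_i$. Procedure Mis\_SWD (synchronized start, all nodes start as workers; statuses worker, candidate, leader, slave, with leader and slave final): phases $i=0,1,\dots,\log\Delta$, each consisting of $C\log N$ sub-phases ($C$ a sufficiently large constant). Each sub-phase has two stages. Stage 1: each worker independently becomes a candidate with probability $2^i/\Delta$; candidates transmit their names by executing an $(N,c_1\log^3N)$-ssf of length $O(\log^7N)$ ($c_1$ a sufficiently large constant); a candidate that hears a message from another candidate becomes a worker again, otherwise it becomes a leader. Stage 2: the nodes that became leaders in Stage 1 transmit their names executing the same kind of ssf; every worker that hears at least one name becomes a slave, with the leader of smallest name heard as its master. *)

theory Defs
  imports "HOL-Probability.Probability"
begin

datatype status = Worker | Candidate | Leader | Slave

definition rng :: "real \<Rightarrow> real \<Rightarrow> real \<Rightarrow> real \<Rightarrow> real" where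
  "rng P \<alpha> Nz \<beta> = (P / (Nz * \<beta>)) powr (1 / \<alpha>)"

definition sinr_rcv ::
  "real \<Rightarrow> real \<Rightarrow> real \<Rightarrow> real \<Rightarrow> real \<Rightarrow> (nat \<Rightarrow> real \<times> real) \<Rightarrow> nat set \<Rightarrow> nat \<Rightarrow> nat \<Rightarrow> bool" where
  "sinr_rcv P \<alpha> Nz \<beta> \<epsilon> pos T u v \<longleftrightarrow>
     u \<notin> T \<and> v \<in> T \<and>
     P * dist (pos v) (pos u) powr (-\<alpha>) /
       (Nz + (\<Sum>w\<in>T - {v}. P * dist (pos w) (pos u) powr (-\<alpha>))) \<ge> \<beta> \<and>
     dist (pos v) (pos u) \<le> (1 - \<epsilon>) * rng P \<alpha> Nz \<beta>"

definition adj ::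
  "real \<Rightarrow> real \<Rightarrow> real \<Rightarrow> real \<Rightarrow> real \<Rightarrow> (nat \<Rightarrow> real \<times> real) \<Rightarrow> nat set \<Rightarrow> nat \<Rightarrow> nat \<Rightarrow> bool" where
  "adj P \<alpha> Nz \<beta> \<epsilon> pos V u v \<longleftrightarrow>
     u \<in> V \<and> v \<in> V \<and> u \<noteq> v \<and> dist (pos u) (pos v) \<le> (1 - \<epsilon>) * rng P \<alpha> Nz \<beta>"

definition max_degree ::
  "real \<Rightarrow> real \<Rightarrow> real \<Rightarrow> real \<Rightarrow> real \<Rightarrow> (nat \<Rightarrow> real \<times> real) \<Rightarrow> nat set \<Rightarrow> nat" where
  "max_degree P \<alpha> Nz \<beta> \<epsilon> pos V =
     Max ((\<lambda>v. card {u. adj P \<alpha> Nz \<beta> \<epsilon> pos V u v}) ` V)"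

definition pivotal_box :: "real \<Rightarrow> real \<times> real \<Rightarrow> int \<times> int" where
  "pivotal_box r p = (\<lfloor>fst p / (r / sqrt 2)\<rfloor>, \<lfloor>snd p / (r / sqrt 2)\<rfloor>)"

text \<open>(N,x)-strongly-selective family, given as a list of rounds S_0,...,S_(s-1).\<close>
definition is_ssf :: "nat \<Rightarrow> real \<Rightarrow> nat set list \<Rightarrow> bool" where
  "is_ssf N x S \<longleftrightarrow>
     (\<forall>j<length S. S ! j \<subseteq> {1..N}) \<and>
     (\<forall>Z. Z \<noteq> {} \<and> Z \<subseteq> {1..N} \<and> real (card Z) \<le> x \<longrightarrow>
          (\<forall>z\<in>Z. \<exists>j<length S. S ! j \<inter> Z = {z}))"

text \<open>Set of nodes from which u receives a message while the participants X
  execute the ssf S (in round j exactly the nodes of X \<inter> S_j transmit).\<close>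
definition heard_ssf ::
  "real \<Rightarrow> real \<Rightarrow> real \<Rightarrow> real \<Rightarrow> real \<Rightarrow> (nat \<Rightarrow> real \<times> real) \<Rightarrow> nat set list \<Rightarrow> nat set \<Rightarrow> nat \<Rightarrow> nat set" where
  "heard_ssf P \<alpha> Nz \<beta> \<epsilon> pos S X u =
     {v. \<exists>j<length S. sinr_rcv P \<alpha> Nz \<beta> \<epsilon> pos (X \<inter> S ! j) u v}"

text \<open>One sub-phase of Mis_SWD. coin v says whether v (if a worker) becomes a candidate.
  Stage 1: candidates execute S; a candidate hearing another candidate becomes a worker
  again, otherwise a leader. Stage 2: the new leaders execute S; workers hearing some
  name become slaves. (Masters are not recorded.)\<close>
definition subphase ::
  "real \<Rightarrow> real \<Rightarrow> real \<Rightarrow> real \<Rightarrow> real \<Rightarrow> (nat \<Rightarrow> real \<times> real) \<Rightarrow> nat set \<Rightarrow> nat set list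
   \<Rightarrow> (nat \<Rightarrow> status) \<Rightarrow> (nat \<Rightarrow> bool) \<Rightarrow> (nat \<Rightarrow> status)" where
  "subphase P \<alpha> Nz \<beta> \<epsilon> pos V S st coin =
     (let cand = {v\<in>V. st v = Worker \<and> coin v};
          L = {v\<in>cand. heard_ssf P \<alpha> Nz \<beta> \<epsilon> pos S cand v = {}};
          st1 = (\<lambda>v. if v \<in> L then Leader else st v);
          sl = {u\<in>V. st1 u = Worker \<and> heard_ssf P \<alpha> Nz \<beta> \<epsilon> pos S L u \<noteq> {}}
      in (\<lambda>v. if v \<in> sl then Slave else st1 v))"

primrec run_subphases ::
  "real \<Rightarrow> real \<Rightarrow> real \<Rightarrow> real \<Rightarrow> real \<Rightarrow> (nat \<Rightarrow> real \<times> real) \<Rightarrow> nat set \<Rightarrow> nat set list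
   \<Rightarrow> (nat \<Rightarrow> status) \<Rightarrow> (nat \<times> nat \<Rightarrow> bool) \<Rightarrow> nat \<Rightarrow> (nat \<Rightarrow> status)" where
  "run_subphases P \<alpha> Nz \<beta> \<epsilon> pos V S st co 0 = st"
| "run_subphases P \<alpha> Nz \<beta> \<epsilon> pos V S st co (Suc m) =
     subphase P \<alpha> Nz \<beta> \<epsilon> pos V S (run_subphases P \<alpha> Nz \<beta> \<epsilon> pos V S st co m) (\<lambda>v. co (m, v))"

definition inv_a ::
  "real \<Rightarrow> real \<Rightarrow> real \<Rightarrow> real \<Rightarrow> (nat \<Rightarrow> real \<times> real) \<Rightarrow> nat set \<Rightarrow> nat \<Rightarrow> (nat \<Rightarrow> status) \<Rightarrow> bool" where
  "inv_a P \<alpha> Nz \<beta> pos V bound st \<longleftrightarrow>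
     (\<forall>b. card {v\<in>V. st v = Worker \<and> pivotal_box (rng P \<alpha> Nz \<beta>) (pos v) = b} \<le> bound)"

definition inv_b ::
  "real \<Rightarrow> real \<Rightarrow> real \<Rightarrow> real \<Rightarrow> real \<Rightarrow> (nat \<Rightarrow> real \<times> real) \<Rightarrow> nat set \<Rightarrow> (nat \<Rightarrow> status) \<Rightarrow> bool" where
  "inv_b P \<alpha> Nz \<beta> \<epsilon> pos V st \<longleftrightarrow>
     (\<forall>u\<in>V. (\<exists>v. adj P \<alpha> Nz \<beta> \<epsilon> pos V u v \<and> st v = Leader) \<longrightarrow> st u = Slave)"

definition inv_c ::
  "real \<Rightarrow> real \<Rightarrow> real \<Rightarrow> real \<Rightarrow> real \<Rightarrow> (nat \<Rightarrow> real \<times> real) \<Rightarrow> nat set \<Rightarrow> (nat \<Rightarrow> status) \<Rightarrow> bool" where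
  "inv_c P \<alpha> Nz \<beta> \<epsilon> pos V st \<longleftrightarrow>
     (\<forall>u\<in>V. card {v. adj P \<alpha> Nz \<beta> \<epsilon> pos V u v \<and> st v = Leader} \<le> 25) \<and>
     (\<forall>u\<in>V. st u \<noteq> Candidate)"

end

theory Submission
  imports Defs
begin

(* Call the coins of a sub-phase uncongested if around every node the disc of radius
   R r / sqrt 2 contains at most c1 log^3 N candidates and the candidates outside it interfere by
   less than the slack ((1 - \<epsilon>) powr -\<alpha> - 1) times the noise. Then the strongly selective
   family delivers every message between neighbours among the candidates and from new leaders to
   neighbouring workers, so no two adjacent candidates both become leaders and every worker next to
   a new leader becomes a slave: (b) is preserved. (c) follows from (b), since leaders with a common
   neighbour are pairwise more than (1 - \<epsilon>) r apart and at most 25 such points fit in a disc of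
   radius (1 - \<epsilon>) r. By (a) a grid box holds at most \<Delta>/2^i workers, each a candidate with
   probability 2^i/\<Delta>, so the disc of radius 2^l R r / sqrt 2 is expected to contain O(R^2 4^l)
   candidates; since \<alpha> > 2 the interference from the dyadic annuli is summable. A tail bound at six
   times the mean and a union bound over sub-phases, nodes and scales l bound the probability of
   congestion by 2 C log N / n^3. *)

section \<open>Tail bounds for independent coins\<close>

lemma prob_Pi_bernoulli_all_true:
  assumes fin: "finite I" and TI: "T \<subseteq> I" and p: "0 \<le> p" "p \<le> 1"
  shows "measure_pmf.prob (Pi_pmf I False (\<lambda>_. bernoulli_pmf p)) {co. \<forall>b\<in>T. co b} = p ^ card T"
proof -
  define F where "F = (\<lambda>b. if b \<in> T then {True} else UNIV)"
  have "{co. \<forall>b\<in>T. co b} = Pi I F" using TI by (auto simp: F_def Pi_def)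
  moreover have "measure_pmf.prob (Pi_pmf I False (\<lambda>_. bernoulli_pmf p)) (Pi I F)
      = (\<Prod>b\<in>I. measure_pmf.prob (bernoulli_pmf p) (F b))"
    by (rule measure_Pi_pmf_Pi[OF fin])
  moreover have "\<dots> = (\<Prod>b\<in>I. if b \<in> T then p else 1)"
    by (intro prod.cong) (auto simp: F_def measure_pmf_single p)
  moreover have "\<dots> = p ^ card T"
    using fin TI by (simp add: prod.If_cases Int_absorb1 finite_subset)
  ultimately show ?thesis by simp
qed

lemma prob_Pi_bernoulli_count_ge:
  assumes fin: "finite I" and BI: "B \<subseteq> I" and p: "0 \<le> p" "p \<le> 1"
  shows "measure_pmf.prob (Pi_pmf I False (\<lambda>_. bernoulli_pmf p)) {co. t \<le> card {b\<in>B. co b}}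
         \<le> real (card B choose t) * p ^ t"
proof -
  let ?M = "Pi_pmf I False (\<lambda>_. bernoulli_pmf p)"
  define \<T> where "\<T> = {T. T \<subseteq> B \<and> card T = t}"
  have finB: "finite B" using fin BI finite_subset by blast
  have "{co. t \<le> card {b\<in>B. co b}} \<subseteq> (\<Union>T\<in>\<T>. {co. \<forall>b\<in>T. co b})"
  proof
    fix co assume "co \<in> {co. t \<le> card {b\<in>B. co b}}"
    then obtain T where "T \<subseteq> {b\<in>B. co b}" "card T = t"
      by (auto elim: obtain_subset_with_card_n)
    then show "co \<in> (\<Union>T\<in>\<T>. {co. \<forall>b\<in>T. co b})" unfolding \<T>_def by blast
  qed
  then have "measure_pmf.prob ?M {co. t \<le> card {b\<in>B. co b}}
      \<le> measure_pmf.prob ?M (\<Union>T\<in>\<T>. {co. \<forall>b\<in>T. co b})"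
    by (rule measure_pmf.finite_measure_mono) simp
  also have "\<dots> \<le> (\<Sum>T\<in>\<T>. measure_pmf.prob ?M {co. \<forall>b\<in>T. co b})"
    using finB by (intro measure_pmf.finite_measure_subadditive_finite) (auto simp: \<T>_def)
  also have "\<dots> = (\<Sum>T\<in>\<T>. p ^ t)"
    using BI by (intro sum.cong refl) (auto simp: \<T>_def prob_Pi_bernoulli_all_true[OF fin _ p])
  also have "\<dots> = real (card B choose t) * p ^ t"
    using n_subsets[OF finB, of t] by (simp add: \<T>_def)
  finally show ?thesis .
qed

lemma power_div_fact_le_exp:
  fixes x :: real
  assumes "0 \<le> x"
  shows "x ^ n / fact n \<le> exp x"
proof -
  have "(\<Sum>m\<in>{n}. x ^ m / fact m) \<le> (\<Sum>m. x ^ m / fact m)"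
    using assms summable_exp_generic[of x]
    by (intro sum_le_suminf) (auto simp: divide_inverse ac_simps)
  also have "\<dots> = exp x" by (simp add: exp_def divide_inverse ac_simps)
  finally show ?thesis by simp
qed

lemma power_div_fact_le_half_power:
  fixes \<mu> :: real
  assumes "0 \<le> \<mu>" "6 * \<mu> \<le> real t"
  shows "\<mu> ^ t / fact t \<le> (1/2) ^ t"
proof (cases "t = 0")
  case False
  then have t: "real t > 0" by simp
  have "\<mu> ^ t / fact t = (\<mu> / t) ^ t * (real t ^ t / fact t)"
    using t by (simp add: power_divide)
  also have "\<dots> \<le> (\<mu> / t) ^ t * exp 1 ^ t"
    using assms t power_div_fact_le_exp[of "real t" t]
    by (intro mult_left_mono) (auto simp: exp_of_nat_mult[symmetric])
  also have "\<dots> \<le> (1/2) ^ t"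
  proof -
    have "\<mu> / t \<le> 1/6" using assms t by (simp add: field_simps)
    moreover have "exp (1::real) \<le> 3" using exp_le by simp
    ultimately have "\<mu> / t * exp 1 \<le> 1/6 * 3"
      using assms t by (intro mult_mono) auto
    then show ?thesis
      using assms t by (simp add: power_mult_distrib[symmetric] power_mono)
  qed
  finally show ?thesis .
qed simp

lemma prob_Pi_bernoulli_count_gt:
  assumes fin: "finite I" and BI: "B \<subseteq> I" and p: "0 \<le> p" "p \<le> 1"
    and mean: "6 * (real (card B) * p) \<le> a" and t: "real t \<le> a"
  shows "measure_pmf.prob (Pi_pmf I False (\<lambda>_. bernoulli_pmf p)) {co. a < real (card {b\<in>B. co b})}
         \<le> (1/2) ^ t"
proof -
  let ?M = "Pi_pmf I False (\<lambda>_. bernoulli_pmf p)"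
  define t' where "t' = nat \<lfloor>a\<rfloor> + 1"
  have a: "0 \<le> a" using mean p by (smt (verit) mult_nonneg_nonneg of_nat_0_le_iff)
  have "{co. a < real (card {b\<in>B. co b})} \<subseteq> {co. t' \<le> card {b\<in>B. co b}}"
  proof (intro Collect_mono impI)
    fix co assume "a < real (card {b\<in>B. co b})"
    then have "\<lfloor>a\<rfloor> < int (card {b\<in>B. co b})" by linarith
    then have "nat \<lfloor>a\<rfloor> < card {b\<in>B. co b}" using a by (metis nat_less_iff zero_le_floor)
    then show "t' \<le> card {b\<in>B. co b}" by (simp add: t'_def)
  qed
  then have "measure_pmf.prob ?M {co. a < real (card {b\<in>B. co b})}
      \<le> measure_pmf.prob ?M {co. t' \<le> card {b\<in>B. co b}}"
    by (rule measure_pmf.finite_measure_mono) simp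
  also have "\<dots> \<le> real (card B choose t') * p ^ t'"
    by (rule prob_Pi_bernoulli_count_ge[OF fin BI p])
  also have "\<dots> \<le> real (card B) ^ t' / fact t' * p ^ t'"
  proof (rule mult_right_mono)
    have "real (card B choose t') * fact t' \<le> real (card B) ^ t'"
      using binomial_fact_pow[of "card B" t']
      by (metis of_nat_fact of_nat_le_iff of_nat_mult of_nat_power)
    then show "real (card B choose t') \<le> real (card B) ^ t' / fact t'"
      by (simp add: field_simps)
  qed (use p in simp)
  also have "\<dots> = (real (card B) * p) ^ t' / fact t'" by (simp add: power_mult_distrib)
  also have "\<dots> \<le> (1/2) ^ t'"
  proof (rule power_div_fact_le_half_power)
    show "6 * (real (card B) * p) \<le> real t'"
      using mean a by (simp add: t'_def) linarith
  qed (use p in simp)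
  also have "\<dots> \<le> (1/2) ^ t"
  proof (rule power_decreasing)
    show "t \<le> t'" using t a by (simp add: t'_def) linarith
  qed simp_all
  finally show ?thesis .
qed

section \<open>Grid counting and packing\<close>

definition grid_cell :: "real \<Rightarrow> real \<times> real \<Rightarrow> int \<times> int" where
  "grid_cell t p = (\<lfloor>fst p / t\<rfloor>, \<lfloor>snd p / t\<rfloor>)"

lemma pivotal_box_eq_grid_cell: "pivotal_box r = grid_cell (r / sqrt 2)"
  by (simp add: fun_eq_iff pivotal_box_def grid_cell_def)

lemma card_floor_range_le:
  fixes c \<rho> t :: real
  assumes "t > 0" "\<rho> \<ge> 0"
  shows "real (card {\<lfloor>(c - \<rho>) / t\<rfloor>..\<lfloor>(c + \<rho>) / t\<rfloor>}) \<le> 2 * \<rho> / t + 2"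
proof -
  have "(c + \<rho>) / t - (c - \<rho>) / t = 2 * \<rho> / t" using assms by (simp add: field_simps)
  then have "real_of_int (\<lfloor>(c + \<rho>) / t\<rfloor> + 1 - \<lfloor>(c - \<rho>) / t\<rfloor>) < 2 * \<rho> / t + 2"
    using of_int_floor_le[of "(c + \<rho>) / t"] real_of_int_floor_add_one_gt[of "(c - \<rho>) / t"]
    by simp linarith
  moreover have "0 \<le> 2 * \<rho> / t" using assms by simp
  ultimately show ?thesis
    by (cases "\<lfloor>(c + \<rho>) / t\<rfloor> + 1 - \<lfloor>(c - \<rho>) / t\<rfloor> \<ge> 0") auto
qed

lemma card_disc_le_grid_bound:
  fixes q :: "'a \<Rightarrow> real \<times> real"
  assumes fin: "finite W" and t: "t > 0" and \<rho>: "\<rho> \<ge> 0"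
    and near: "\<And>w. w \<in> W \<Longrightarrow> dist (q w) c \<le> \<rho>"
    and cell: "\<And>b. card {w\<in>W. grid_cell t (q w) = b} \<le> m"
  shows "real (card W) \<le> real m * (2 * \<rho> / t + 2)\<^sup>2"
proof -
  define I where "I = (\<lambda>z. {\<lfloor>(z - \<rho>) / t\<rfloor>..\<lfloor>(z + \<rho>) / t\<rfloor>})"
  have floor_in_I: "\<lfloor>a / t\<rfloor> \<in> I z" if "dist a z \<le> \<rho>" for a z
    using that t by (auto simp: I_def dist_real_def intro!: floor_mono divide_right_mono)
  have "grid_cell t (q w) \<in> I (fst c) \<times> I (snd c)" if "w \<in> W" for w
    using near[OF that] dist_fst_le[of "q w" c] dist_snd_le[of "q w" c]
    by (auto simp: grid_cell_def intro!: floor_in_I)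
  then have "W = (\<Union>b\<in>I (fst c) \<times> I (snd c). {w\<in>W. grid_cell t (q w) = b})" by blast
  then have "card W = card (\<Union>b\<in>I (fst c) \<times> I (snd c). {w\<in>W. grid_cell t (q w) = b})"
    by (rule arg_cong)
  also have "\<dots> \<le> (\<Sum>b\<in>I (fst c) \<times> I (snd c). card {w\<in>W. grid_cell t (q w) = b})"
    by (rule card_UN_le) (simp add: I_def)
  also have "\<dots> \<le> (\<Sum>b\<in>I (fst c) \<times> I (snd c). m)"
    by (rule sum_mono) (rule cell)
  also have "\<dots> = m * (card (I (fst c)) * card (I (snd c)))"
    by (simp add: card_cartesian_product)
  finally have "real (card W) \<le> real m * (real (card (I (fst c))) * real (card (I (snd c))))"
    by (metis of_nat_le_iff of_nat_mult)
  also have "\<dots> \<le> real m * ((2 * \<rho> / t + 2) * (2 * \<rho> / t + 2))"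
    using card_floor_range_le[OF t \<rho>] t \<rho> by (intro mult_left_mono mult_mono) (auto simp: I_def)
  finally show ?thesis by (simp add: power2_eq_square)
qed

lemma abs_diff_lt_if_floor_div_eq:
  fixes u v t :: real
  assumes t: "t > 0" and eq: "\<lfloor>u / t\<rfloor> = \<lfloor>v / t\<rfloor>"
  shows "\<bar>u - v\<bar> < t"
proof -
  have "\<bar>u / t - v / t\<bar> < 1"
    using eq of_int_floor_le[of "u / t"] real_of_int_floor_add_one_gt[of "u / t"]
      of_int_floor_le[of "v / t"] real_of_int_floor_add_one_gt[of "v / t"]
    by (simp add: abs_less_iff) linarith
  then show ?thesis using t by (simp add: diff_divide_distrib[symmetric])
qed

lemma dist_lt_if_same_grid_cell:
  assumes t: "t > 0" and eq: "grid_cell t x = grid_cell t y"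
  shows "dist x y < sqrt 2 * t"
proof -
  have "\<bar>fst x - fst y\<bar> < t" "\<bar>snd x - snd y\<bar> < t"
    using eq by (auto simp: grid_cell_def intro: abs_diff_lt_if_floor_div_eq[OF t])
  then have "(fst x - fst y)\<^sup>2 < t\<^sup>2" "(snd x - snd y)\<^sup>2 < t\<^sup>2"
    using t by (metis abs_le_square_iff abs_of_pos not_le)+
  then have "(dist x y)\<^sup>2 < (sqrt 2 * t)\<^sup>2"
    by (simp add: dist_prod_def dist_real_def power_mult_distrib)
  then show ?thesis using t by (auto intro: power2_less_imp_less)
qed

text \<open>Points pairwise more than \<open>d\<close> apart lie in distinct cells of side \<open>7d/10\<close>, whose
  diagonal is below \<open>d\<close>; a disc of radius \<open>d\<close> meets at most \<open>(34/7)\<^sup>2 < 25\<close> of them.\<close>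
lemma card_separated_in_disc_le_25:
  fixes q :: "'a \<Rightarrow> real \<times> real"
  assumes fin: "finite W" and d: "d > 0"
    and near: "\<And>w. w \<in> W \<Longrightarrow> dist (q w) c \<le> d"
    and far: "\<And>w w'. w \<in> W \<Longrightarrow> w' \<in> W \<Longrightarrow> w \<noteq> w' \<Longrightarrow> dist (q w) (q w') > d"
  shows "card W \<le> 25"
proof -
  define t where "t = 7/10 * d"
  have t: "t > 0" using d by (simp add: t_def)
  have "sqrt 2 \<le> 10/7" by (rule real_le_lsqrt) (auto simp: power2_eq_square)
  then have diag: "sqrt 2 * t \<le> d" using d by (simp add: t_def)
  have "card {w\<in>W. grid_cell t (q w) = b} \<le> 1" for b
  proof -
    have "w = w'" if "w \<in> W" "w' \<in> W" "grid_cell t (q w) = grid_cell t (q w')" for w w'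
      using far[OF that(1,2)] dist_lt_if_same_grid_cell[OF t that(3)] diag by force
    then show ?thesis using fin by (auto simp: card_le_Suc0_iff_eq)
  qed
  then have "real (card W) \<le> 1 * (2 * d / t + 2)\<^sup>2"
    using card_disc_le_grid_bound[of W t d q c 1] fin t near d by fastforce
  also have "\<dots> \<le> 25" using d by (simp add: t_def power2_eq_square)
  finally show ?thesis by simp
qed

lemma exists_dyadic_annulus:
  fixes \<rho> \<delta> :: real
  assumes "\<rho> < \<delta>" "\<delta> \<le> \<rho> * 2 ^ M"
  shows "\<exists>m<M. \<rho> * 2 ^ m < \<delta> \<and> \<delta> \<le> \<rho> * 2 ^ Suc m"
  using assms(2)
proof (induction M)
  case (Suc M)
  show ?case
  proof (cases "\<delta> \<le> \<rho> * 2 ^ M")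
    case True
    then show ?thesis using Suc.IH less_SucI by blast
  next
    case False
    then show ?thesis using Suc.prems by auto
  qed
qed (use assms(1) in simp)

lemma powr_dyadic_times_four_power:
  fixes a \<alpha> :: real
  assumes "a > 0"
  shows "(a * 2 ^ m) powr (-\<alpha>) * 4 ^ m = a powr (-\<alpha>) * (2 powr (2 - \<alpha>)) ^ m"
proof -
  have two: "(2::real) ^ m = 2 powr real m" by (simp add: powr_realpow)
  have four: "(4::real) ^ m = 2 powr (2 * real m)"
    using powr_realpow[of 2 "2 * m"] by (simp add: power_mult)
  have "(a * 2 ^ m) powr (-\<alpha>) * 4 ^ m = a powr (-\<alpha>) * (2 powr (real m * (-\<alpha>)) * 2 powr (2 * real m))"
    using assms by (simp add: powr_mult two four powr_powr)
  also have "2 powr (real m * (-\<alpha>)) * 2 powr (2 * real m) = 2 powr ((2 - \<alpha>) * real m)"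
    by (simp add: powr_add[symmetric] algebra_simps)
  also have "\<dots> = (2 powr (2 - \<alpha>)) ^ m" by (simp add: powr_powr[symmetric] powr_realpow)
  finally show ?thesis .
qed

lemma sum_power_lessThan_le:
  fixes q :: real
  assumes "0 \<le> q" "q < 1"
  shows "(\<Sum>m<M. q ^ m) \<le> 1 / (1 - q)"
  using assms by (simp add: sum_gp_strict divide_right_mono)

lemma four_k_plus_l_le_threshold:
  fixes R :: real
  assumes R: "2 \<le> R" "real k \<le> R"
  shows "real (4 * k + l) \<le> 54 * R\<^sup>2 * 4 ^ l"
proof -
  have "real l + 1 \<le> 4 ^ l" by (induction l) auto
  then have "54 * R\<^sup>2 * (real l + 1) \<le> 54 * R\<^sup>2 * 4 ^ l" by (intro mult_left_mono) auto
  moreover have "4 \<le> R\<^sup>2" using power_mono[OF R(1), of 2] by simp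
  moreover have "real k \<le> R\<^sup>2"
  proof -
    have "R * 1 \<le> R * R" using R by (intro mult_left_mono) auto
    then show ?thesis using R unfolding power2_eq_square by linarith
  qed
  moreover have "real l \<le> R\<^sup>2 * real l" using \<open>4 \<le> R\<^sup>2\<close> by (simp add: mult_le_cancel_right1)
  moreover have "54 * R\<^sup>2 * (real l + 1) = 54 * (R\<^sup>2 * real l) + 54 * R\<^sup>2"
    by (simp add: algebra_simps)
  ultimately show ?thesis by simp
qed

lemma mult_half_power_le_div_cube:
  fixes c v :: real
  assumes c: "0 \<le> c" and v: "0 < v" "v \<le> 2 ^ k"
  shows "c * v * (1/2) ^ (4 * k) \<le> c / v ^ 3"
proof -
  have "v ^ 4 \<le> (2 ^ k) ^ 4" using v by (intro power_mono) auto
  then have "v ^ 4 \<le> 2 ^ (4 * k)" by (simp add: power_mult[symmetric] mult.commute)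
  then have "v / 2 ^ (4 * k) \<le> v / v ^ 4" using v by (intro divide_left_mono) auto
  also have "v / v ^ 4 = 1 / v ^ 3" using v by (simp add: power_Suc[symmetric] numeral_eq_Suc)
  finally have "v * (1/2) ^ (4 * k) \<le> 1 / v ^ 3" by (simp add: power_one_over)
  then have "c * (v * (1/2) ^ (4 * k)) \<le> c * (1 / v ^ 3)" using c by (rule mult_left_mono)
  then show ?thesis by (simp add: mult.assoc)
qed

lemma power2_add_le_mult_cube:
  fixes a :: real
  assumes "0 \<le> a" "1 \<le> k"
  shows "(a + real k)\<^sup>2 \<le> (a + 1)\<^sup>2 * real k ^ 3"
proof -
  have "a \<le> a * real k" using mult_left_mono[of 1 "real k" a] assms by simp
  then have "(a + real k)\<^sup>2 \<le> ((a + 1) * real k)\<^sup>2"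
    using assms by (intro power_mono) (auto simp: algebra_simps)
  also have "\<dots> = (a + 1)\<^sup>2 * real k ^ 2" by (simp add: power_mult_distrib)
  also have "\<dots> \<le> (a + 1)\<^sup>2 * real k ^ 3"
    using assms by (intro mult_left_mono power_increasing) auto
  finally show ?thesis .
qed

lemma bernoulli_rate_mult_cap:
  assumes "i < d"
  shows "(2::real) ^ i / 2 ^ d * real ((2::nat) ^ d div 2 ^ i) = 1"
proof -
  have "(2::nat) ^ d div 2 ^ i = 2 ^ (d - i)" using assms by (simp add: power_diff)
  then have "real ((2::nat) ^ d div 2 ^ i) = 2 ^ (d - i)" by simp
  moreover have "(2::real) ^ d = 2 ^ i * 2 ^ (d - i)" using assms by (simp flip: power_add)
  ultimately show ?thesis by simp
qed

section \<open>SINR reception\<close>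

locale sinr_params =
  fixes P \<alpha> Nz \<beta> \<epsilon> :: real
  assumes P_pos: "P > 0" and alpha_gt_2: "\<alpha> > 2" and Nz_pos: "Nz > 0" and beta_ge_1: "\<beta> \<ge> 1"
    and eps_pos: "0 < \<epsilon>" and eps_lt_1: "\<epsilon> < 1"
begin

abbreviation r :: real where "r \<equiv> rng P \<alpha> Nz \<beta>"

definition reach :: real where "reach = (1 - \<epsilon>) * r"

definition side :: real where "side = r / sqrt 2"

text \<open>The interference a receiver can tolerate on top of the noise while still decoding a
  sender at distance \<open>reach\<close>.\<close>
definition slack :: real where "slack = Nz * ((1 - \<epsilon>) powr (-\<alpha>) - 1)"

lemma r_pos: "r > 0"
  using P_pos Nz_pos beta_ge_1 by (simp add: rng_def)

lemma reach_pos: "reach > 0"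
  using r_pos eps_lt_1 by (simp add: reach_def)

lemma side_pos: "side > 0"
  using r_pos by (simp add: side_def)

lemma slack_pos: "slack > 0"
proof -
  have "(1 - \<epsilon>) powr \<alpha> < 1" using eps_pos eps_lt_1 alpha_gt_2 by (subst powr01_less_one) auto
  moreover have "(1 - \<epsilon>) powr \<alpha> > 0" using eps_lt_1 by simp
  ultimately have "(1 - \<epsilon>) powr (-\<alpha>) > 1" by (simp add: powr_minus_divide)
  then show ?thesis using Nz_pos by (simp add: slack_def)
qed

lemma signal_at_reach: "P * reach powr (-\<alpha>) = \<beta> * (Nz + slack)"
proof -
  have "r powr (-\<alpha>) = (P / (Nz * \<beta>)) powr ((1 / \<alpha>) * (-\<alpha>))"
    by (simp add: rng_def powr_powr)
  also have "\<dots> = Nz * \<beta> / P"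
    using alpha_gt_2 P_pos Nz_pos beta_ge_1 by (simp add: powr_neg_one)
  finally have "r powr (-\<alpha>) = Nz * \<beta> / P" .
  moreover have "reach powr (-\<alpha>) = (1 - \<epsilon>) powr (-\<alpha>) * r powr (-\<alpha>)"
    using eps_lt_1 r_pos by (simp add: reach_def powr_mult)
  ultimately show ?thesis using P_pos by (simp add: slack_def algebra_simps)
qed

lemma reach_le_side_mult: "R \<ge> 2 \<Longrightarrow> reach \<le> side * R"
proof -
  assume "R \<ge> 2"
  have "sqrt 2 \<le> 2" by (rule real_le_lsqrt) auto
  have "reach \<le> r" using eps_pos r_pos by (simp add: reach_def mult_le_cancel_right1)
  also have "r \<le> side * 2" using r_pos \<open>sqrt 2 \<le> 2\<close> by (simp add: side_def field_simps)
  also have "\<dots> \<le> side * R" using side_pos \<open>R \<ge> 2\<close> by simp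
  finally show ?thesis .
qed

text \<open>Since \<open>\<alpha> > 2\<close>, the interference bound obtained from the dyadic annuli around a disc of
  radius \<open>side * R\<close> decays like \<open>R powr (2 - \<alpha>)\<close>.\<close>
lemma eventually_dyadic_interference_le_slack:
  obtains R0 where "R0 \<ge> 2"
    and "\<And>R. R \<ge> R0 \<Longrightarrow> 216 * R\<^sup>2 * P * (side * R) powr (-\<alpha>) / (1 - 2 powr (2 - \<alpha>)) \<le> slack"
proof -
  define K where "K = 216 * P * side powr (-\<alpha>) / (1 - 2 powr (2 - \<alpha>))"
  have "2 powr (2 - \<alpha>) < (1::real)" using alpha_gt_2 by (intro powr_less_one) auto
  then have K: "K > 0" using P_pos side_pos by (simp add: K_def)
  have "((\<lambda>R. R powr (2 - \<alpha>)) \<longlongrightarrow> 0) at_top"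
    using alpha_gt_2 by (intro tendsto_neg_powr filterlim_ident) auto
  then have "eventually (\<lambda>R. R powr (2 - \<alpha>) < slack / K) at_top"
    using slack_pos K by (intro order_tendstoD) auto
  then obtain R1 where R1: "\<And>R. R \<ge> R1 \<Longrightarrow> R powr (2 - \<alpha>) < slack / K"
    by (auto simp: eventually_at_top_linorder)
  show ?thesis
  proof (rule that[of "max 2 R1"])
    fix R assume R: "max 2 R1 \<le> R"
    then have "R > 0" by simp
    then have "216 * R\<^sup>2 * P * (side * R) powr (-\<alpha>) / (1 - 2 powr (2 - \<alpha>)) = K * R powr (2 - \<alpha>)"
      using side_pos
      by (simp add: K_def powr_mult powr_diff powr_minus_divide field_simps)
    also have "\<dots> \<le> slack" using R1[of R] R K by (simp add: field_simps)
    finally show "216 * R\<^sup>2 * P * (side * R) powr (-\<alpha>) / (1 - 2 powr (2 - \<alpha>)) \<le> slack" .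
  qed simp
qed

end

locale sinr_network = sinr_params +
  fixes pos :: "nat \<Rightarrow> real \<times> real" and V :: "nat set" and S :: "nat set list"
    and N :: nat and x :: real
  assumes finite_V: "finite V" and inj_pos: "inj_on pos V" and V_names: "V \<subseteq> {1..N}"
    and ssf: "is_ssf N x S"
begin

abbreviation adjacent :: "nat \<Rightarrow> nat \<Rightarrow> bool" where
  "adjacent \<equiv> adj P \<alpha> Nz \<beta> \<epsilon> pos V"

definition disc :: "nat set \<Rightarrow> real \<Rightarrow> nat \<Rightarrow> nat set" where
  "disc W \<rho> u = {w\<in>W. dist (pos w) (pos u) \<le> \<rho>}"

definition far_interference :: "nat set \<Rightarrow> (nat \<Rightarrow> bool) \<Rightarrow> real \<Rightarrow> nat \<Rightarrow> real" where
  "far_interference W c \<rho> u =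
     (\<Sum>w\<in>{w\<in>W. c w \<and> \<rho> < dist (pos w) (pos u)}. P * dist (pos w) (pos u) powr (-\<alpha>))"

text \<open>Enough for the strongly selective family to deliver every message between neighbours
  among the selected nodes.\<close>
definition uncongested :: "nat set \<Rightarrow> real \<Rightarrow> (nat \<Rightarrow> bool) \<Rightarrow> bool" where
  "uncongested W \<rho> c \<longleftrightarrow>
     (\<forall>u\<in>V. real (card {w\<in>disc W \<rho> u. c w}) \<le> x \<and> far_interference W c \<rho> u \<le> slack)"

lemma adjacent_sym: "adjacent u v \<Longrightarrow> adjacent v u"
  by (auto simp: adj_def dist_commute)

lemma adjacent_iff: "adjacent u v \<longleftrightarrow> u \<in> V \<and> v \<in> V \<and> u \<noteq> v \<and> dist (pos v) (pos u) \<le> reach"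
  by (auto simp: adj_def reach_def dist_commute)

lemma sinr_rcv_if_interference_le_slack:
  assumes T: "T \<subseteq> V" "v \<in> T" "u \<notin> T" and uv: "adjacent u v"
    and interference: "(\<Sum>w\<in>T - {v}. P * dist (pos w) (pos u) powr (-\<alpha>)) \<le> slack"
  shows "sinr_rcv P \<alpha> Nz \<beta> \<epsilon> pos T u v"
proof -
  define d where "d = dist (pos v) (pos u)"
  have "pos v \<noteq> pos u" using uv inj_pos by (auto simp: adjacent_iff dest: inj_onD)
  then have d: "0 < d" "d \<le> reach" using uv by (auto simp: d_def adjacent_iff)
  have "0 \<le> (\<Sum>w\<in>T - {v}. P * dist (pos w) (pos u) powr (-\<alpha>))"
    using P_pos by (intro sum_nonneg) simp
  then have "0 < Nz + (\<Sum>w\<in>T - {v}. P * dist (pos w) (pos u) powr (-\<alpha>))"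
    using Nz_pos by linarith
  moreover have "\<beta> * (Nz + (\<Sum>w\<in>T - {v}. P * dist (pos w) (pos u) powr (-\<alpha>))) \<le> P * d powr (-\<alpha>)"
  proof -
    have "\<beta> * (Nz + (\<Sum>w\<in>T - {v}. P * dist (pos w) (pos u) powr (-\<alpha>))) \<le> \<beta> * (Nz + slack)"
      using interference beta_ge_1 by simp
    also have "\<dots> = P * reach powr (-\<alpha>)" by (rule signal_at_reach[symmetric])
    also have "\<dots> \<le> P * d powr (-\<alpha>)"
      using P_pos d alpha_gt_2 by (intro mult_left_mono powr_mono2') auto
    finally show ?thesis .
  qed
  ultimately show ?thesis
    using T d unfolding sinr_rcv_def d_def reach_def[symmetric] by (simp add: pos_le_divide_eq)
qed

lemma ssf_isolates:
  assumes "Z \<subseteq> {1..N}" "real (card Z) \<le> x" "z \<in> Z"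
  obtains j where "j < length S" "S ! j \<inter> Z = {z}"
proof -
  have "Z \<noteq> {} \<and> Z \<subseteq> {1..N} \<and> real (card Z) \<le> x \<longrightarrow> (\<forall>z\<in>Z. \<exists>j<length S. S ! j \<inter> Z = {z})"
    using ssf unfolding is_ssf_def by (rule conjunct2[THEN spec])
  then show thesis using assms that by auto
qed

lemma heard_ssf_if_uncongested:
  assumes W: "W \<subseteq> V" and unc: "uncongested W \<rho> c" and \<rho>: "reach \<le> \<rho>"
    and X: "X \<subseteq> {w\<in>W. c w}" and u: "u \<in> V" and v: "v \<in> X" and uv: "adjacent u v"
  shows "v \<in> heard_ssf P \<alpha> Nz \<beta> \<epsilon> pos S X u"
proof -
  define Z where "Z = disc X \<rho> u"
  have "Z \<subseteq> {1..N}" using X W V_names by (auto simp: Z_def disc_def)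
  moreover have "Z \<subseteq> {w\<in>disc W \<rho> u. c w}" using X by (auto simp: Z_def disc_def)
  then have "card Z \<le> card {w\<in>disc W \<rho> u. c w}"
    using W finite_V by (intro card_mono) (auto simp: disc_def intro: finite_subset)
  then have "real (card Z) \<le> x" using unc u unfolding uncongested_def by (meson of_nat_le_iff order_trans)
  moreover have vZ: "v \<in> Z" using v uv \<rho> by (simp add: Z_def disc_def adjacent_iff)
  ultimately obtain j where j: "j < length S" "S ! j \<inter> Z = {v}"
    by (rule ssf_isolates)
  \<comment> \<open>In the round isolating \<open>v\<close> in \<open>Z\<close>, all other transmitters are farther than \<open>\<rho>\<close> from \<open>u\<close>.\<close>
  define T where "T = X \<inter> S ! j"
  have T: "T \<subseteq> V" "v \<in> T" using X W j vZ v by (auto simp: T_def)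
  have far: "T - {v} \<subseteq> {w\<in>W. c w \<and> \<rho> < dist (pos w) (pos u)}"
  proof
    fix w assume w: "w \<in> T - {v}"
    then have "w \<notin> Z" using j(2) by (auto simp: T_def)
    then show "w \<in> {w\<in>W. c w \<and> \<rho> < dist (pos w) (pos u)}"
      using w X by (auto simp: T_def Z_def disc_def)
  qed
  have "u \<notin> T"
  proof
    assume "u \<in> T"
    moreover have "u \<noteq> v" using uv by (simp add: adjacent_iff)
    ultimately have "u \<in> T - {v}" by simp
    then show False using far \<rho> reach_pos by auto
  qed
  moreover have "(\<Sum>w\<in>T - {v}. P * dist (pos w) (pos u) powr (-\<alpha>)) \<le> far_interference W c \<rho> u"
    unfolding far_interference_def using far W finite_V P_pos
    by (intro sum_mono2) (auto intro: finite_subset)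
  moreover have "far_interference W c \<rho> u \<le> slack" using unc u by (simp add: uncongested_def)
  ultimately have "sinr_rcv P \<alpha> Nz \<beta> \<epsilon> pos T u v"
    using T uv by (intro sinr_rcv_if_interference_le_slack) auto
  then show ?thesis using j unfolding heard_ssf_def T_def by blast
qed

section \<open>Invariants (b) and (c) over a phase\<close>

text \<open>Throughout a phase, the nodes of \<open>W\<close> (the workers at its start) are the only possible
  workers and hence the only possible candidates.\<close>
definition phase_invariant :: "nat set \<Rightarrow> (nat \<Rightarrow> status) \<Rightarrow> bool" where
  "phase_invariant W st \<longleftrightarrow>
     inv_b P \<alpha> Nz \<beta> \<epsilon> pos V st \<and> (\<forall>u\<in>V. st u \<noteq> Candidate) \<and> {v\<in>V. st v = Worker} \<subseteq> W"

lemma subphase_preserves_phase_invariant: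
  assumes W: "W \<subseteq> V" and unc: "uncongested W \<rho> c" and \<rho>: "reach \<le> \<rho>"
    and inv: "phase_invariant W st"
  shows "phase_invariant W (subphase P \<alpha> Nz \<beta> \<epsilon> pos V S st c)"
proof -
  define cand where "cand = {v\<in>V. st v = Worker \<and> c v}"
  define L where "L = {v\<in>cand. heard_ssf P \<alpha> Nz \<beta> \<epsilon> pos S cand v = {}}"
  define st1 where "st1 = (\<lambda>v. if v \<in> L then Leader else st v)"
  define sl where "sl = {u\<in>V. st1 u = Worker \<and> heard_ssf P \<alpha> Nz \<beta> \<epsilon> pos S L u \<noteq> {}}"
  define st' where "st' = (\<lambda>v. if v \<in> sl then Slave else st1 v)"
  have subphase_eq: "subphase P \<alpha> Nz \<beta> \<epsilon> pos V S st c = st'"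
    unfolding subphase_def Let_def cand_def L_def st1_def sl_def st'_def by simp
  have b: "inv_b P \<alpha> Nz \<beta> \<epsilon> pos V st" and no_cand: "\<forall>u\<in>V. st u \<noteq> Candidate"
    and workers: "{v\<in>V. st v = Worker} \<subseteq> W"
    using inv by (auto simp: phase_invariant_def)
  have cand_W: "cand \<subseteq> {w\<in>W. c w}" using workers by (auto simp: cand_def)
  have L_cand: "L \<subseteq> cand" by (auto simp: L_def)
  have slave_stays: "st' u = Slave" if "st u = Slave" for u
    using that by (auto simp: st'_def st1_def sl_def L_def cand_def)
  have neighbour_of_new_leader: "st' u = Slave" if v: "v \<in> L" and uv: "adjacent u v" for u v
  proof -
    have "st v = Worker" using v by (auto simp: L_def cand_def)
    then have "st u \<noteq> Leader" using b adjacent_sym[OF uv] by (auto simp: inv_b_def adjacent_iff)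
    moreover have "st u \<noteq> Candidate" using no_cand uv by (simp add: adjacent_iff)
    ultimately consider "st u = Slave" | "st u = Worker" by (cases "st u") auto
    then show ?thesis
    proof cases
      case 2
      have u: "u \<in> V" using uv by (simp add: adjacent_iff)
      have "u \<notin> L"
      proof
        assume "u \<in> L"
        moreover have "v \<in> heard_ssf P \<alpha> Nz \<beta> \<epsilon> pos S cand u"
          using heard_ssf_if_uncongested[OF W unc \<rho> cand_W u _ uv] v L_cand by blast
        ultimately show False by (auto simp: L_def)
      qed
      moreover have "v \<in> heard_ssf P \<alpha> Nz \<beta> \<epsilon> pos S L u"
        using heard_ssf_if_uncongested[OF W unc \<rho> _ u v uv] L_cand cand_W by blast
      ultimately have "u \<in> sl" using 2 u by (auto simp: sl_def st1_def)
      then show ?thesis by (simp add: st'_def)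
    qed (rule slave_stays)
  qed
  have "st' u = Slave" if "u \<in> V" "adjacent u v" "st' v = Leader" for u v
  proof -
    have "v \<in> L \<or> st v = Leader" using that(3) by (auto simp: st'_def st1_def split: if_splits)
    then show ?thesis
      using neighbour_of_new_leader[OF _ that(2)] slave_stays b that(1,2)
      by (auto simp: inv_b_def)
  qed
  then have "inv_b P \<alpha> Nz \<beta> \<epsilon> pos V st'" by (auto simp: inv_b_def)
  moreover have "\<forall>u\<in>V. st' u \<noteq> Candidate" using no_cand by (auto simp: st'_def st1_def)
  moreover have "{v\<in>V. st' v = Worker} \<subseteq> W"
    using workers by (auto simp: st'_def st1_def split: if_splits)
  ultimately show ?thesis by (simp add: subphase_eq phase_invariant_def)
qed

lemma run_subphases_preserves_phase_invariant:
  assumes W: "W \<subseteq> V" and \<rho>: "reach \<le> \<rho>" and unc: "\<And>j. j < n \<Longrightarrow> uncongested W \<rho> (\<lambda>v. co (j, v))"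
    and inv: "phase_invariant W st"
  shows "phase_invariant W (run_subphases P \<alpha> Nz \<beta> \<epsilon> pos V S st co n)"
  using unc
proof (induction n)
  case (Suc n)
  then show ?case using subphase_preserves_phase_invariant[OF W _ \<rho>] by simp
qed (simp add: inv)

text \<open>Leaders adjacent to a common node are pairwise non-adjacent by (b), so they are more than
  \<open>reach\<close> apart inside a disc of radius \<open>reach\<close>.\<close>
lemma inv_c_if_inv_b:
  assumes b: "inv_b P \<alpha> Nz \<beta> \<epsilon> pos V st" and no_cand: "\<forall>u\<in>V. st u \<noteq> Candidate"
  shows "inv_c P \<alpha> Nz \<beta> \<epsilon> pos V st"
proof -
  have "card {v. adjacent u v \<and> st v = Leader} \<le> 25" for u
  proof (rule card_separated_in_disc_le_25[where q = pos and c = "pos u" and d = reach])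
    show "finite {v. adjacent u v \<and> st v = Leader}"
      using finite_V by (rule finite_subset[rotated]) (auto simp: adjacent_iff)
    show "dist (pos w) (pos u) \<le> reach" if "w \<in> {v. adjacent u v \<and> st v = Leader}" for w
      using that by (simp add: adjacent_iff)
    show "reach < dist (pos w) (pos w')"
      if "w \<in> {v. adjacent u v \<and> st v = Leader}" "w' \<in> {v. adjacent u v \<and> st v = Leader}" "w \<noteq> w'"
      for w w'
    proof (rule ccontr)
      assume "\<not> reach < dist (pos w) (pos w')"
      then have "adjacent w' w" using that by (auto simp: adjacent_iff)
      then show False using b that by (auto simp: inv_b_def adjacent_iff)
    qed
  qed (rule reach_pos)
  then show ?thesis using no_cand by (simp add: inv_c_def)
qed

section \<open>Interference from dyadic annuli\<close>

lemma far_interference_le_dyadic_sum: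
  assumes W: "finite W" and \<rho>: "\<rho> > 0" and M: "\<forall>w\<in>W. dist (pos w) (pos u) \<le> \<rho> * 2 ^ M"
  shows "far_interference W c \<rho> u
    \<le> (\<Sum>m<M. real (card {w\<in>disc W (\<rho> * 2 ^ Suc m) u. c w}) * (P * (\<rho> * 2 ^ m) powr (-\<alpha>)))"
proof -
  define F where "F = {w\<in>W. c w \<and> \<rho> < dist (pos w) (pos u)}"
  define g where "g w m = (if dist (pos w) (pos u) \<le> \<rho> * 2 ^ Suc m then P * (\<rho> * 2 ^ m) powr (-\<alpha>) else 0)"
    for w m
  have "P * dist (pos w) (pos u) powr (-\<alpha>) \<le> (\<Sum>m<M. g w m)" if w: "w \<in> F" for w
  proof -
    obtain m where m: "m < M" "\<rho> * 2 ^ m < dist (pos w) (pos u)" "dist (pos w) (pos u) \<le> \<rho> * 2 ^ Suc m"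
      using exists_dyadic_annulus[of \<rho> "dist (pos w) (pos u)" M] w M by (auto simp: F_def)
    have "P * dist (pos w) (pos u) powr (-\<alpha>) \<le> P * (\<rho> * 2 ^ m) powr (-\<alpha>)"
      using P_pos m \<rho> alpha_gt_2 by (intro mult_left_mono powr_mono2') auto
    also have "\<dots> = g w m" using m by (simp add: g_def)
    also have "\<dots> \<le> (\<Sum>m<M. g w m)"
      using m P_pos by (intro member_le_sum) (auto simp: g_def)
    finally show ?thesis .
  qed
  then have "far_interference W c \<rho> u \<le> (\<Sum>w\<in>F. \<Sum>m<M. g w m)"
    unfolding far_interference_def F_def[symmetric] by (rule sum_mono)
  also have "\<dots> = (\<Sum>m<M. \<Sum>w\<in>F. g w m)" by (rule sum.swap)
  also have "\<dots> \<le> (\<Sum>m<M. real (card {w\<in>disc W (\<rho> * 2 ^ Suc m) u. c w}) * (P * (\<rho> * 2 ^ m) powr (-\<alpha>)))"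
  proof (rule sum_mono)
    fix m
    have "(\<Sum>w\<in>F. g w m) = real (card {w\<in>F. dist (pos w) (pos u) \<le> \<rho> * 2 ^ Suc m}) * (P * (\<rho> * 2 ^ m) powr (-\<alpha>))"
      using W by (simp add: g_def sum.If_cases F_def Int_def)
    also have "\<dots> \<le> real (card {w\<in>disc W (\<rho> * 2 ^ Suc m) u. c w}) * (P * (\<rho> * 2 ^ m) powr (-\<alpha>))"
      using W P_pos by (intro mult_right_mono of_nat_mono card_mono) (auto simp: F_def disc_def)
    finally show "(\<Sum>w\<in>F. g w m) \<le> \<dots>" .
  qed
  finally show ?thesis .
qed

lemma uncongested_if_dyadic_counts:
  assumes W: "W \<subseteq> V" and \<rho>: "\<rho> > 0" and a: "0 \<le> a" "a \<le> x"
    and M: "\<forall>u\<in>V. \<forall>w\<in>W. dist (pos w) (pos u) \<le> \<rho> * 2 ^ M"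
    and counts: "\<forall>u\<in>V. \<forall>m\<le>M. real (card {w\<in>disc W (\<rho> * 2 ^ m) u. c w}) \<le> a * 4 ^ m"
    and slack: "4 * a * P * \<rho> powr (-\<alpha>) / (1 - 2 powr (2 - \<alpha>)) \<le> slack"
  shows "uncongested W \<rho> c"
  unfolding uncongested_def
proof
  fix u assume u: "u \<in> V"
  define q where "q = (2::real) powr (2 - \<alpha>)"
  have q: "0 \<le> q" "q < 1" using alpha_gt_2 by (auto simp: q_def intro: powr_less_one)
  have near: "real (card {w\<in>disc W \<rho> u. c w}) \<le> x" using counts[rule_format, OF u, of 0] a by simp
  have "far_interference W c \<rho> u
      \<le> (\<Sum>m<M. real (card {w\<in>disc W (\<rho> * 2 ^ Suc m) u. c w}) * (P * (\<rho> * 2 ^ m) powr (-\<alpha>)))"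
    using W finite_V \<rho> M u by (intro far_interference_le_dyadic_sum) (auto intro: finite_subset)
  also have "\<dots> \<le> (\<Sum>m<M. a * 4 ^ Suc m * (P * (\<rho> * 2 ^ m) powr (-\<alpha>)))"
  proof (intro sum_mono mult_right_mono)
    fix m assume "m \<in> {..<M}"
    then show "real (card {w\<in>disc W (\<rho> * 2 ^ Suc m) u. c w}) \<le> a * 4 ^ Suc m"
      by (intro counts[rule_format, OF u]) simp
  qed (use P_pos in simp)
  also have "\<dots> = 4 * a * P * \<rho> powr (-\<alpha>) * (\<Sum>m<M. q ^ m)"
    using powr_dyadic_times_four_power[OF \<rho>, of _ \<alpha>]
    by (simp add: sum_distrib_left q_def algebra_simps)
  also have "\<dots> \<le> 4 * a * P * \<rho> powr (-\<alpha>) * (1 / (1 - q))"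
    using a P_pos q by (intro mult_left_mono sum_power_lessThan_le) auto
  also have "\<dots> \<le> slack" using slack by (simp add: q_def)
  finally show "real (card {w\<in>disc W \<rho> u. c w}) \<le> x \<and> far_interference W c \<rho> u \<le> slack"
    using near by simp
qed

lemma exists_dyadic_bound:
  assumes "\<rho> > 0"
  obtains M where "\<forall>u\<in>V. \<forall>w\<in>V. dist (pos w) (pos u) \<le> \<rho> * 2 ^ M"
proof -
  define D where "D = Max (insert 0 ((\<lambda>(w, u). dist (pos w) (pos u)) ` (V \<times> V)))"
  have D: "dist (pos w) (pos u) \<le> D" if "u \<in> V" "w \<in> V" for u w
    unfolding D_def using that finite_V by (intro Max_ge) auto
  obtain M where "D / \<rho> < 2 ^ M" using real_arch_pow[of 2 "D / \<rho>"] by auto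
  then have "D \<le> \<rho> * 2 ^ M" using assms by (simp add: divide_less_eq mult.commute)
  then show ?thesis using D that by (meson order_trans)
qed

section \<open>Probability of congestion\<close>

lemma card_disc_mult_prob_le:
  assumes W: "W \<subseteq> V" and cells: "\<And>b. card {w\<in>W. pivotal_box r (pos w) = b} \<le> cap"
    and p: "0 \<le> p" "p * real cap \<le> 1" and \<rho>: "\<rho> \<ge> 0"
  shows "real (card (disc W \<rho> u)) * p \<le> (2 * \<rho> / side + 2)\<^sup>2"
proof -
  have fin: "finite (disc W \<rho> u)" using W finite_V by (auto simp: disc_def intro: finite_subset)
  have "card {w\<in>disc W \<rho> u. grid_cell side (pos w) = b} \<le> cap" for b
  proof -
    have "card {w\<in>disc W \<rho> u. grid_cell side (pos w) = b} \<le> card {w\<in>W. pivotal_box r (pos w) = b}"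
      using W finite_V
      by (intro card_mono) (auto simp: disc_def pivotal_box_eq_grid_cell side_def intro: finite_subset)
    then show ?thesis using cells[of b] by simp
  qed
  then have "real (card (disc W \<rho> u)) \<le> real cap * (2 * \<rho> / side + 2)\<^sup>2"
    using card_disc_le_grid_bound[OF fin side_pos \<rho>, of pos "pos u"] by (auto simp: disc_def)
  then have "real (card (disc W \<rho> u)) * p \<le> real cap * (2 * \<rho> / side + 2)\<^sup>2 * p"
    using p by (intro mult_right_mono) auto
  also have "\<dots> = (p * real cap) * (2 * \<rho> / side + 2)\<^sup>2" by simp
  also have "\<dots> \<le> (2 * \<rho> / side + 2)\<^sup>2" using p by (simp add: mult_left_le_one_le)
  finally show ?thesis .
qed

definition congested :: "nat set \<Rightarrow> real \<Rightarrow> real \<Rightarrow> nat \<Rightarrow> nat \<Rightarrow> (nat \<times> nat \<Rightarrow> bool) set" where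
  "congested W \<rho> a j u = {co. a < real (card {w\<in>disc W \<rho> u. co (j, w)})}"

text \<open>The expected number of candidates in a disc of radius \<open>side * R * 2 ^ l\<close> is at most
  \<open>9 * R\<^sup>2 * 4 ^ l\<close>, a sixth of the threshold.\<close>
lemma prob_congested_le:
  assumes W: "W \<subseteq> V" and cells: "\<And>b. card {w\<in>W. pivotal_box r (pos w) = b} \<le> cap"
    and p: "0 \<le> p" "p \<le> 1" "p * real cap \<le> 1" and R: "2 \<le> R" "real k \<le> R" and j: "j < n"
  shows "measure_pmf.prob (Pi_pmf ({..<n} \<times> V) False (\<lambda>_. bernoulli_pmf p))
           (congested W (side * R * 2 ^ l) (54 * R\<^sup>2 * 4 ^ l) j u) \<le> (1/2) ^ (4 * k + l)"
proof -
  define D where "D = disc W (side * R * 2 ^ l) u"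
  have two_pow: "1 \<le> (2::real) ^ l" by simp
  have "real (card D) * p \<le> (2 * (side * R * 2 ^ l) / side + 2)\<^sup>2"
    unfolding D_def using side_pos R by (intro card_disc_mult_prob_le[OF W cells p(1,3)]) auto
  also have "\<dots> = (2 * R * 2 ^ l + 2)\<^sup>2" using side_pos by (simp add: mult.assoc)
  also have "\<dots> \<le> (3 * R * 2 ^ l)\<^sup>2"
    using R mult_mono[OF R(1) two_pow] by (intro power_mono) auto
  also have "\<dots> = 9 * R\<^sup>2 * (2 ^ l * 2 ^ l)" by (simp add: power2_eq_square)
  also have "\<dots> = 9 * R\<^sup>2 * 4 ^ l" by (simp flip: power_mult_distrib)
  finally have "real (card D) * p \<le> 9 * R\<^sup>2 * 4 ^ l" .
  moreover have "card (Pair j ` D) = card D" by (simp add: card_image inj_on_def)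
  ultimately have mean: "6 * (real (card (Pair j ` D)) * p) \<le> 54 * R\<^sup>2 * 4 ^ l"
    by (simp only:)
  have threshold: "real (4 * k + l) \<le> 54 * R\<^sup>2 * 4 ^ l" using R by (rule four_k_plus_l_le_threshold)
  have "Pair j ` D \<subseteq> {..<n} \<times> V" using j W by (auto simp: D_def disc_def)
  from prob_Pi_bernoulli_count_gt[OF _ this p(1,2) mean threshold]
  have "measure_pmf.prob (Pi_pmf ({..<n} \<times> V) False (\<lambda>_. bernoulli_pmf p))
      {co. 54 * R\<^sup>2 * 4 ^ l < real (card {b\<in>Pair j ` D. co b})} \<le> (1/2) ^ (4 * k + l)"
    using finite_V by simp
  moreover have "card {b\<in>Pair j ` D. co b} = card {w\<in>D. co (j, w)}" for co
  proof -
    have "{b\<in>Pair j ` D. co b} = Pair j ` {w\<in>D. co (j, w)}" by auto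
    then show ?thesis by (simp add: card_image inj_on_def)
  qed
  ultimately show ?thesis by (simp add: congested_def D_def)
qed

lemma prob_some_congested_le:
  assumes W: "W \<subseteq> V" and cells: "\<And>b. card {w\<in>W. pivotal_box r (pos w) = b} \<le> cap"
    and p: "0 \<le> p" "p \<le> 1" "p * real cap \<le> 1" and R: "2 \<le> R" "real k \<le> R"
  shows "measure_pmf.prob (Pi_pmf ({..<n} \<times> V) False (\<lambda>_. bernoulli_pmf p))
           (\<Union>j<n. \<Union>u\<in>V. \<Union>l\<le>M. congested W (side * R * 2 ^ l) (54 * R\<^sup>2 * 4 ^ l) j u)
         \<le> 2 * real n * real (card V) * (1/2) ^ (4 * k)"
proof -
  let ?M = "Pi_pmf ({..<n} \<times> V) False (\<lambda>_. bernoulli_pmf p)"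
  let ?E = "\<lambda>j u l. congested W (side * R * 2 ^ l) (54 * R\<^sup>2 * 4 ^ l) j u"
  have union: "measure_pmf.prob ?M (\<Union>i\<in>I. A i) \<le> (\<Sum>i\<in>I. measure_pmf.prob ?M (A i))"
    if "finite I" for I :: "nat set" and A
    using that by (intro measure_pmf.finite_measure_subadditive_finite) auto
  have "measure_pmf.prob ?M (\<Union>j<n. \<Union>u\<in>V. \<Union>l\<le>M. ?E j u l)
      \<le> (\<Sum>j<n. measure_pmf.prob ?M (\<Union>u\<in>V. \<Union>l\<le>M. ?E j u l))"
    by (rule union) simp
  also have "\<dots> \<le> (\<Sum>j<n. \<Sum>u\<in>V. measure_pmf.prob ?M (\<Union>l\<le>M. ?E j u l))"
    by (intro sum_mono union finite_V)
  also have "\<dots> \<le> (\<Sum>j<n. \<Sum>u\<in>V. \<Sum>l\<le>M. measure_pmf.prob ?M (?E j u l))"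
    by (intro sum_mono union) simp
  also have "\<dots> \<le> (\<Sum>j<n. \<Sum>u\<in>V. \<Sum>l\<le>M. (1/2) ^ (4 * k) * (1/2) ^ l)"
    using prob_congested_le[OF W cells p R] by (intro sum_mono) (simp add: power_add)
  also have "\<dots> = (\<Sum>j<n. \<Sum>u\<in>V. (1/2) ^ (4 * k) * (\<Sum>l\<le>M. (1/2) ^ l))"
    by (simp add: sum_distrib_left)
  also have "\<dots> \<le> (\<Sum>j<n. \<Sum>u\<in>V. (1/2) ^ (4 * k) * 2)"
  proof (intro sum_mono mult_left_mono)
    have "(\<Sum>l<Suc M. (1/2::real) ^ l) \<le> 1 / (1 - 1/2)" by (rule sum_power_lessThan_le) auto
    then show "(\<Sum>l\<le>M. (1/2::real) ^ l) \<le> 2" by (simp add: lessThan_Suc_atMost)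
  qed simp
  also have "\<dots> = 2 * real n * real (card V) * (1/2) ^ (4 * k)" by simp
  finally show ?thesis .
qed

lemma phase_preserves_inv_bc_whp:
  assumes cells: "inv_a P \<alpha> Nz \<beta> pos V cap st"
    and p: "0 \<le> p" "p \<le> 1" "p * real cap \<le> 1" and R: "2 \<le> R" "real k \<le> R" and x: "54 * R\<^sup>2 \<le> x"
    and interference: "216 * R\<^sup>2 * P * (side * R) powr (-\<alpha>) / (1 - 2 powr (2 - \<alpha>)) \<le> slack"
    and b: "inv_b P \<alpha> Nz \<beta> \<epsilon> pos V st" and c: "inv_c P \<alpha> Nz \<beta> \<epsilon> pos V st"
  shows "1 - 2 * real n * real (card V) * (1/2) ^ (4 * k)
    \<le> measure_pmf.prob (Pi_pmf ({..<n} \<times> V) False (\<lambda>_. bernoulli_pmf p))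
        {co. inv_b P \<alpha> Nz \<beta> \<epsilon> pos V (run_subphases P \<alpha> Nz \<beta> \<epsilon> pos V S st co n) \<and>
             inv_c P \<alpha> Nz \<beta> \<epsilon> pos V (run_subphases P \<alpha> Nz \<beta> \<epsilon> pos V S st co n)}"
    (is "_ \<le> measure_pmf.prob ?M ?Good")
proof -
  define W where "W = {v\<in>V. st v = Worker}"
  have W: "W \<subseteq> V" by (auto simp: W_def)
  have cells_W: "card {w\<in>W. pivotal_box r (pos w) = b} \<le> cap" for b
  proof -
    have "{w\<in>W. pivotal_box r (pos w) = b} = {v\<in>V. st v = Worker \<and> pivotal_box r (pos v) = b}"
      by (auto simp: W_def)
    then show ?thesis using spec[OF cells[unfolded inv_a_def], of b] by simp
  qed
  have sR: "side * R > 0" using side_pos R by simp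
  obtain M where M: "\<forall>u\<in>V. \<forall>w\<in>V. dist (pos w) (pos u) \<le> side * R * 2 ^ M"
    using exists_dyadic_bound[OF sR] .
  define Bad where "Bad = (\<Union>j<n. \<Union>u\<in>V. \<Union>l\<le>M. congested W (side * R * 2 ^ l) (54 * R\<^sup>2 * 4 ^ l) j u)"
  have "co \<in> ?Good" if "co \<notin> Bad" for co
  proof -
    have "uncongested W (side * R) (\<lambda>v. co (j, v))" if j: "j < n" for j
    proof (rule uncongested_if_dyadic_counts[OF W sR _ x])
      show "\<forall>u\<in>V. \<forall>w\<in>W. dist (pos w) (pos u) \<le> side * R * 2 ^ M" using M W by blast
      show "\<forall>u\<in>V. \<forall>l\<le>M. real (card {w\<in>disc W (side * R * 2 ^ l) u. co (j, w)}) \<le> 54 * R\<^sup>2 * 4 ^ l"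
        using \<open>co \<notin> Bad\<close> j by (auto simp: Bad_def congested_def not_less)
      show "4 * (54 * R\<^sup>2) * P * (side * R) powr (-\<alpha>) / (1 - 2 powr (2 - \<alpha>)) \<le> slack"
        using interference by simp
    qed simp
    moreover have "phase_invariant W st" using b c by (auto simp: phase_invariant_def inv_c_def W_def)
    ultimately have "phase_invariant W (run_subphases P \<alpha> Nz \<beta> \<epsilon> pos V S st co n)"
      by (intro run_subphases_preserves_phase_invariant[OF W reach_le_side_mult[OF R(1)]])
    then show ?thesis using inv_c_if_inv_b by (simp add: phase_invariant_def)
  qed
  then have "measure_pmf.prob ?M (UNIV - Bad) \<le> measure_pmf.prob ?M ?Good"
    by (intro measure_pmf.finite_measure_mono) auto
  moreover have "measure_pmf.prob ?M (UNIV - Bad) = 1 - measure_pmf.prob ?M Bad"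
    using measure_pmf.prob_compl[of Bad] by simp
  moreover have "measure_pmf.prob ?M Bad \<le> 2 * real n * real (card V) * (1/2) ^ (4 * k)"
    unfolding Bad_def by (rule prob_some_congested_le[OF W cells_W p R])
  ultimately show ?thesis by linarith
qed

end

lemma (in sinr_params) mis_phase_preserves_inv_bc:
  fixes c1 C k d i :: nat
  assumes R0: "2 \<le> R0"
      "\<And>R. R0 \<le> R \<Longrightarrow> 216 * R\<^sup>2 * P * (side * R) powr (-\<alpha>) / (1 - 2 powr (2 - \<alpha>)) \<le> slack"
    and c1: "54 * (R0 + 1)\<^sup>2 \<le> real c1"
    and V: "V \<noteq> {}" "V \<subseteq> {1..2 ^ k}" and inj: "inj_on pos V"
    and ssf: "is_ssf (2 ^ k) (real c1 * real k ^ 3) S" and i: "i < d"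
    and a: "inv_a P \<alpha> Nz \<beta> pos V (2 ^ d div 2 ^ i) st"
    and b: "inv_b P \<alpha> Nz \<beta> \<epsilon> pos V st" and c: "inv_c P \<alpha> Nz \<beta> \<epsilon> pos V st"
  shows "1 - 2 * real C * real k / real (card V) ^ 3
    \<le> measure_pmf.prob (Pi_pmf ({..<C * k} \<times> V) False (\<lambda>_. bernoulli_pmf (2 ^ i / 2 ^ d)))
        {co. inv_b P \<alpha> Nz \<beta> \<epsilon> pos V (run_subphases P \<alpha> Nz \<beta> \<epsilon> pos V S st co (C * k)) \<and>
             inv_c P \<alpha> Nz \<beta> \<epsilon> pos V (run_subphases P \<alpha> Nz \<beta> \<epsilon> pos V S st co (C * k))}"
proof (cases "k = 0")
  case False
  have "finite V" using V(2) by (rule finite_subset) simp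
  interpret sinr_network P \<alpha> Nz \<beta> \<epsilon> pos V S "2 ^ k" "real c1 * real k ^ 3"
    using \<open>finite V\<close> inj V(2) ssf by unfold_locales
  \<comment> \<open>With \<open>R \<ge> log N\<close> every congestion event has probability at most \<open>N ^ -4\<close>.\<close>
  define R where "R = R0 + real k"
  have R: "2 \<le> R" "real k \<le> R" using R0 by (auto simp: R_def)
  have "54 * R\<^sup>2 \<le> 54 * (R0 + 1)\<^sup>2 * real k ^ 3"
    using power2_add_le_mult_cube[of R0 k] R0 False by (simp add: R_def)
  also have "\<dots> \<le> real c1 * real k ^ 3" using c1 by (intro mult_right_mono) auto
  finally have x: "54 * R\<^sup>2 \<le> real c1 * real k ^ 3" .
  have "1 - 2 * real (C * k) * real (card V) * (1/2) ^ (4 * k)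
    \<le> measure_pmf.prob (Pi_pmf ({..<C * k} \<times> V) False (\<lambda>_. bernoulli_pmf (2 ^ i / 2 ^ d)))
        {co. inv_b P \<alpha> Nz \<beta> \<epsilon> pos V (run_subphases P \<alpha> Nz \<beta> \<epsilon> pos V S st co (C * k)) \<and>
             inv_c P \<alpha> Nz \<beta> \<epsilon> pos V (run_subphases P \<alpha> Nz \<beta> \<epsilon> pos V S st co (C * k))}"
    using R0(2)[of R] i
    by (intro phase_preserves_inv_bc_whp[OF a _ _ bernoulli_rate_mult_cap[OF i, THEN eq_refl] R x _ b c])
      (simp_all add: R_def)
  moreover have "card V \<le> card {1..(2::nat) ^ k}" using V(2) by (intro card_mono) auto
  then have "2 * real (C * k) * real (card V) * (1/2) ^ (4 * k) \<le> 2 * real (C * k) / real (card V) ^ 3"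
    using V(1) finite_V by (intro mult_half_power_le_div_cube) (auto simp: card_gt_0_iff)
  ultimately show ?thesis by simp
qed (use b c in simp)

theorem lemma4:
  fixes P \<alpha> Nz \<beta> \<epsilon> :: real
  assumes "P > 0" and "\<alpha> > 2" and "Nz > 0" and "\<beta> \<ge> 1" and "0 < \<epsilon>" and "\<epsilon> < 1"
  shows "\<exists>c1\<^sub>0 C\<^sub>0 :: nat. \<forall>c1 C :: nat. c1 \<ge> c1\<^sub>0 \<longrightarrow> C \<ge> C\<^sub>0 \<longrightarrow>
    (\<forall>Lc :: real. \<exists>K :: real.
      \<forall>(k :: nat) (d :: nat) (i :: nat) (V :: nat set) (pos :: nat \<Rightarrow> real \<times> real)
        (st :: nat \<Rightarrow> status) (S :: nat set list).
        V \<noteq> {} \<longrightarrow> V \<subseteq> {1..2^k} \<longrightarrow> inj_on pos V \<longrightarrow>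
        max_degree P \<alpha> Nz \<beta> \<epsilon> pos V = 2^d \<longrightarrow> i < d \<longrightarrow>
        is_ssf (2^k) (real c1 * real k ^ 3) S \<longrightarrow> real (length S) \<le> Lc * real k ^ 7 \<longrightarrow>
        inv_a P \<alpha> Nz \<beta> pos V (2^d div 2^i) st \<longrightarrow>
        inv_b P \<alpha> Nz \<beta> \<epsilon> pos V st \<longrightarrow>
        inv_c P \<alpha> Nz \<beta> \<epsilon> pos V st \<longrightarrow>
        measure_pmf.prob (Pi_pmf ({..<C * k} \<times> V) False (\<lambda>_. bernoulli_pmf (2^i / 2^d)))
          {co. inv_b P \<alpha> Nz \<beta> \<epsilon> pos V (run_subphases P \<alpha> Nz \<beta> \<epsilon> pos V S st co (C * k)) \<and>
               inv_c P \<alpha> Nz \<beta> \<epsilon> pos V (run_subphases P \<alpha> Nz \<beta> \<epsilon> pos V S st co (C * k))}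
        \<ge> 1 - K * real k / real (card V) ^ 3)"
proof -
  interpret sinr_params P \<alpha> Nz \<beta> \<epsilon> using assms by unfold_locales
  obtain R0 where R0: "2 \<le> R0"
    "\<And>R. R0 \<le> R \<Longrightarrow> 216 * R\<^sup>2 * P * (side * R) powr (-\<alpha>) / (1 - 2 powr (2 - \<alpha>)) \<le> slack"
    by (rule eventually_dyadic_interference_le_slack) auto
  show ?thesis
    apply (rule exI[of _ "nat \<lceil>54 * (R0 + 1)\<^sup>2\<rceil>"], rule exI[of _ 0], intro allI impI)
    subgoal premises prems for c1 C Lc
    proof -
      have "real (nat \<lceil>54 * (R0 + 1)\<^sup>2\<rceil>) \<le> real c1" using prems(1) by (rule of_nat_mono)
      then have c1: "54 * (R0 + 1)\<^sup>2 \<le> real c1"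
        using real_nat_ceiling_ge[of "54 * (R0 + 1)\<^sup>2"] by linarith
      show ?thesis by (intro exI[of _ "2 * real C"] allI impI mis_phase_preserves_inv_bc[OF R0 c1])
    qed
    done
qed

end
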